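(* Let $N,G,H$ be finitely generated groups. If $G$ and $H$ are biLipschitz equivalent, then $N\wr G$ and $N\wr H$ are biLipschitz equivalent.
   Context: Groups carry word metrics from finite generating sets. $N\wr G=\bigl(\bigoplus_G N\bigr)\rtimes G$ with $G$ acting by left translation of coordinates, with the word metric for the standard generating set (lamp generators at the identity and generators of $G$). A biLipschitz equivalence is a bijection $f$ with $\frac1C d(x,y)\le d(f(x),f(y))\le Cd(x,y)$ for some $C\ge1$. *)

theory Defs
  imports "HOL-Algebra.Generated_Groups" "HOL-Library.FuncSet" Complex_Main
begin

definition fin_gen_set :: "('a, 'b) monoid_scheme \<Rightarrow> 'a set \<Rightarrow> bool" where
  "fin_gen_set G S \<longleftrightarrow> finite S \<and> S \<subseteq> carrier G \<and> generate G S = carrier G"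

definition word_length :: "('a, 'b) monoid_scheme \<Rightarrow> 'a set \<Rightarrow> 'a \<Rightarrow> nat" where
  "word_length G S x =
     (LEAST n. \<exists>ws. length ws = n \<and> set ws \<subseteq> S \<union> (\<lambda>s. inv\<^bsub>G\<^esub> s) ` S
                 \<and> x = foldr (\<lambda>a b. a \<otimes>\<^bsub>G\<^esub> b) ws \<one>\<^bsub>G\<^esub>)"

definition word_dist :: "('a, 'b) monoid_scheme \<Rightarrow> 'a set \<Rightarrow> 'a \<Rightarrow> 'a \<Rightarrow> nat" where
  "word_dist G S x y = word_length G S (inv\<^bsub>G\<^esub> x \<otimes>\<^bsub>G\<^esub> y)"

definition bilipschitz_equiv ::
  "('a, 'b) monoid_scheme \<Rightarrow> 'a set \<Rightarrow> ('c, 'd) monoid_scheme \<Rightarrow> 'c set \<Rightarrow> bool" where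
  "bilipschitz_equiv G S H T \<longleftrightarrow>
     (\<exists>f (C::real). C \<ge> 1 \<and> bij_betw f (carrier G) (carrier H) \<and>
        (\<forall>x\<in>carrier G. \<forall>y\<in>carrier G.
            real (word_dist G S x y) / C \<le> real (word_dist H T (f x) (f y)) \<and>
            real (word_dist H T (f x) (f y)) \<le> C * real (word_dist G S x y)))"

text \<open>Wreath product N wr G = (finitely supported functions carrier G -> carrier N) semidirect G,
  G acting by left translation: (g.f)(x) = f(g^{-1} x).
  Functions are extended by the identity of N outside carrier G.\<close>
definition wreath :: "('n, 'c) monoid_scheme \<Rightarrow> ('g, 'd) monoid_scheme \<Rightarrow> (('g \<Rightarrow> 'n) \<times> 'g) monoid" where
  "wreath N G =
    \<lparr> carrier = {(f, g). g \<in> carrier G \<and> (\<forall>x. f x \<in> carrier N)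
                     \<and> (\<forall>x. x \<notin> carrier G \<longrightarrow> f x = \<one>\<^bsub>N\<^esub>)
                     \<and> finite {x. f x \<noteq> \<one>\<^bsub>N\<^esub>}},
      mult = (\<lambda>(f, g) (f', g').
                (\<lambda>x. if x \<in> carrier G then f x \<otimes>\<^bsub>N\<^esub> f' (inv\<^bsub>G\<^esub> g \<otimes>\<^bsub>G\<^esub> x) else \<one>\<^bsub>N\<^esub>,
                 g \<otimes>\<^bsub>G\<^esub> g')),
      one = (\<lambda>_. \<one>\<^bsub>N\<^esub>, \<one>\<^bsub>G\<^esub>) \<rparr>"

definition wreath_gens ::
  "('n, 'c) monoid_scheme \<Rightarrow> 'n set \<Rightarrow> ('g, 'd) monoid_scheme \<Rightarrow> 'g set \<Rightarrow> (('g \<Rightarrow> 'n) \<times> 'g) set" where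
  "wreath_gens N S G T =
     (\<lambda>s. (\<lambda>x. if x = \<one>\<^bsub>G\<^esub> then s else \<one>\<^bsub>N\<^esub>, \<one>\<^bsub>G\<^esub>)) ` S
     \<union> (\<lambda>t. (\<lambda>_. \<one>\<^bsub>N\<^esub>, t)) ` T"

end

(*
  A bijection f : G -> H with inverse g induces the bijection (c, p) |-> (c o g, f p) between the
  wreath products: the lamp configuration is transported along f and the lamplighter at p moves to
  f p. Word metrics are geodesic, so a map is C-Lipschitz as soon as it moves the two ends of every
  generator edge at most C apart. Switching the lamp at the current position p corresponds to
  switching the lamp at f p, a single generator again. Moving the lamplighter from p to p t for a
  generator t of G corresponds to moving it from f p to f (p t), and these are at most C apart in H;
  a word in the generators of H is also a word in the wreath generators. The same argument for g
  gives the lower bound.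
*)

theory Submission
  imports Defs
begin

abbreviation letters :: "('a, 'b) monoid_scheme \<Rightarrow> 'a set \<Rightarrow> 'a set" where
  "letters G S \<equiv> S \<union> (\<lambda>s. inv\<^bsub>G\<^esub> s) ` S"

abbreviation word_eval :: "('a, 'b) monoid_scheme \<Rightarrow> 'a list \<Rightarrow> 'a" where
  "word_eval G ws \<equiv> foldr (\<lambda>a b. a \<otimes>\<^bsub>G\<^esub> b) ws \<one>\<^bsub>G\<^esub>"

context group
begin

lemma letters_subset_carrier: "S \<subseteq> carrier G \<Longrightarrow> letters G S \<subseteq> carrier G"
  by auto

lemma word_eval_closed: "set ws \<subseteq> carrier G \<Longrightarrow> word_eval G ws \<in> carrier G"
  by (induction ws) auto

lemma word_eval_append:
  "set ws \<subseteq> carrier G \<Longrightarrow> set vs \<subseteq> carrier G \<Longrightarrow>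
    word_eval G (ws @ vs) = word_eval G ws \<otimes> word_eval G vs"
  by (induction ws) (auto simp: m_assoc word_eval_closed)

lemma generate_imp_word:
  assumes "S \<subseteq> carrier G" "x \<in> generate G S"
  shows "\<exists>ws. set ws \<subseteq> letters G S \<and> x = word_eval G ws"
  using assms(2)
proof (induction rule: generate.induct)
  case one
  show ?case by (intro exI[of _ "[]"]) auto
next
  case (incl h)
  then show ?case using assms(1) by (intro exI[of _ "[h]"]) auto
next
  case (inv h)
  then show ?case using assms(1) by (intro exI[of _ "[inv h]"]) auto
next
  case (eng h1 h2)
  then obtain ws vs where "set ws \<subseteq> letters G S" "h1 = word_eval G ws"
    "set vs \<subseteq> letters G S" "h2 = word_eval G vs" by blast
  moreover from calculation have "set ws \<subseteq> carrier G" "set vs \<subseteq> carrier G"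
    using letters_subset_carrier[OF assms(1)] by auto
  ultimately show ?case
    by (intro exI[of _ "ws @ vs"]) (simp add: word_eval_append del: foldr_append)
qed

lemma word_length_le: "set ws \<subseteq> letters G S \<Longrightarrow> word_length G S (word_eval G ws) \<le> length ws"
  unfolding word_length_def by (rule Least_le) auto

lemma word_length_one: "word_length G S \<one> = 0"
  using word_length_le[of "[]" S] by simp

lemma word_length_letter:
  "S \<subseteq> carrier G \<Longrightarrow> s \<in> letters G S \<Longrightarrow> word_length G S s \<le> 1"
  using word_length_le[of "[s]" S] by auto

lemma shortest_word:
  assumes "S \<subseteq> carrier G" "x \<in> generate G S"
  obtains ws where "length ws = word_length G S x" "set ws \<subseteq> letters G S" "x = word_eval G ws"
proof -
  have "\<exists>ws. length ws = word_length G S x \<and> set ws \<subseteq> letters G S \<and> x = word_eval G ws"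
    unfolding word_length_def by (rule LeastI_ex) (use generate_imp_word[OF assms] in auto)
  then show ?thesis using that by blast
qed

lemma word_dist_self: "x \<in> carrier G \<Longrightarrow> word_dist G S x x = 0"
  by (simp add: word_dist_def word_length_one)

lemma word_dist_mult_right:
  "x \<in> carrier G \<Longrightarrow> z \<in> carrier G \<Longrightarrow> word_dist G S x (x \<otimes> z) = word_length G S z"
  unfolding word_dist_def by (simp add: m_assoc[symmetric])

end

locale generating_set = group +
  fixes S
  assumes gens_subset: "S \<subseteq> carrier G"
    and generate_eq: "generate G S = carrier G"
begin

lemma word_length_mult:
  assumes "x \<in> carrier G" "y \<in> carrier G"
  shows "word_length G S (x \<otimes> y) \<le> word_length G S x + word_length G S y"
proof -
  obtain ws where ws: "length ws = word_length G S x" "set ws \<subseteq> letters G S" "x = word_eval G ws"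
    using shortest_word gens_subset generate_eq assms(1) by metis
  obtain vs where vs: "length vs = word_length G S y" "set vs \<subseteq> letters G S" "y = word_eval G vs"
    using shortest_word gens_subset generate_eq assms(2) by metis
  have "set ws \<subseteq> carrier G" "set vs \<subseteq> carrier G"
    using ws vs letters_subset_carrier[OF gens_subset] by auto
  then have "x \<otimes> y = word_eval G (ws @ vs)"
    using ws vs by (simp add: word_eval_append del: foldr_append)
  then show ?thesis
    using word_length_le[of "ws @ vs" S] ws vs by simp
qed

lemma word_dist_triangle:
  assumes "x \<in> carrier G" "y \<in> carrier G" "z \<in> carrier G"
  shows "word_dist G S x z \<le> word_dist G S x y + word_dist G S y z"
proof -
  have "inv x \<otimes> z = (inv x \<otimes> y) \<otimes> (inv y \<otimes> z)"
    using assms by (simp add: m_assoc[symmetric]) (simp add: m_assoc)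
  then show ?thesis
    unfolding word_dist_def using word_length_mult assms by simp
qed

end

lemma (in group_hom) letters_image:
  assumes "S \<subseteq> carrier G"
  shows "letters H (h ` S) = h ` letters G S"
proof -
  have "(\<lambda>s. h (inv s)) ` S = (\<lambda>s. inv\<^bsub>H\<^esub> (h s)) ` S"
    using assms by (intro image_cong) auto
  then show ?thesis by (simp add: image_Un image_image)
qed

lemma (in group_hom) word_eval_image:
  "set ws \<subseteq> carrier G \<Longrightarrow> word_eval H (map h ws) = h (word_eval G ws)"
  by (induction ws) (auto simp: G.word_eval_closed)

lemma (in group_hom) word_length_image_le:
  assumes "S \<subseteq> carrier G" "h ` S \<subseteq> T" "x \<in> generate G S"
  shows "word_length H T (h x) \<le> word_length G S x"
proof -
  obtain ws where ws: "length ws = word_length G S x" "set ws \<subseteq> letters G S" "x = word_eval G ws"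
    using G.shortest_word assms(1,3) by metis
  have "h ` letters G S \<subseteq> letters H T"
    using assms(2) letters_image[OF assms(1)] by blast
  then have letters: "set (map h ws) \<subseteq> letters H T"
    using image_mono[OF ws(2), of h] by simp
  have "set ws \<subseteq> carrier G"
    using ws(2) G.letters_subset_carrier[OF assms(1)] by (rule order_trans)
  then have "h x = word_eval H (map h ws)"
    using ws(3) by (simp add: word_eval_image)
  then show ?thesis
    using H.word_length_le[OF letters] ws(1) by simp
qed

definition word_lipschitz ::
  "('a, 'b) monoid_scheme \<Rightarrow> 'a set \<Rightarrow> ('c, 'd) monoid_scheme \<Rightarrow> 'c set \<Rightarrow> ('a \<Rightarrow> 'c) \<Rightarrow> real \<Rightarrow> bool"
  where "word_lipschitz G S H T f K \<longleftrightarrow>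
    (\<forall>x\<in>carrier G. \<forall>y\<in>carrier G. real (word_dist H T (f x) (f y)) \<le> K * real (word_dist G S x y))"

lemma word_lipschitz_letter_bound:
  assumes "group G" "S \<subseteq> carrier G" "word_lipschitz G S H T f K" "K \<ge> 0"
    and "x \<in> carrier G" "s \<in> letters G S"
  shows "real (word_dist H T (f x) (f (x \<otimes>\<^bsub>G\<^esub> s))) \<le> K"
proof -
  interpret group G by fact
  have s: "s \<in> carrier G" using assms(2,6) by auto
  have "real (word_dist H T (f x) (f (x \<otimes>\<^bsub>G\<^esub> s))) \<le> K * real (word_dist G S x (x \<otimes>\<^bsub>G\<^esub> s))"
    using assms(3,5) s by (simp add: word_lipschitz_def)
  also have "\<dots> = K * real (word_length G S s)"
    using assms(5) s by (simp add: word_dist_mult_right)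
  also have "\<dots> \<le> K"
    using word_length_letter[OF assms(2,6)] assms(4) by (simp add: mult_left_le)
  finally show ?thesis .
qed

lemma word_lipschitz_from_letters:
  assumes "generating_set G S" "generating_set H T" "f \<in> carrier G \<rightarrow> carrier H"
    and letter_bound: "\<And>x s. x \<in> carrier G \<Longrightarrow> s \<in> letters G S \<Longrightarrow>
      real (word_dist H T (f x) (f (x \<otimes>\<^bsub>G\<^esub> s))) \<le> K"
  shows "word_lipschitz G S H T f K"
proof -
  interpret G: generating_set G S by fact
  interpret H: generating_set H T by fact
  have walk: "real (word_dist H T (f x) (f (x \<otimes>\<^bsub>G\<^esub> word_eval G ws))) \<le> K * length ws"
    if "set ws \<subseteq> letters G S" "x \<in> carrier G" for ws x
    using that
  proof (induction ws arbitrary: x)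
    case Nil
    then show ?case using H.word_dist_self[OF funcset_mem[OF assms(3)]] by simp
  next
    case (Cons s ws)
    have s: "s \<in> carrier G" and ws: "set ws \<subseteq> carrier G"
      using Cons.prems(1) G.letters_subset_carrier[OF G.gens_subset] by auto
    let ?y = "x \<otimes>\<^bsub>G\<^esub> s"
    have y: "?y \<in> carrier G" using s Cons.prems(2) by simp
    have "x \<otimes>\<^bsub>G\<^esub> word_eval G (s # ws) = ?y \<otimes>\<^bsub>G\<^esub> word_eval G ws"
      using s ws Cons.prems(2) by (simp add: G.m_assoc G.word_eval_closed)
    moreover have "real (word_dist H T (f x) (f (?y \<otimes>\<^bsub>G\<^esub> word_eval G ws)))
        \<le> real (word_dist H T (f x) (f ?y)) + real (word_dist H T (f ?y) (f (?y \<otimes>\<^bsub>G\<^esub> word_eval G ws)))"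
      using H.word_dist_triangle assms(3) Cons.prems(2) y ws
      by (metis G.m_closed G.word_eval_closed Pi_mem of_nat_add of_nat_mono)
    moreover have "real (word_dist H T (f x) (f ?y)) \<le> K"
      using letter_bound Cons.prems by simp
    moreover have "real (word_dist H T (f ?y) (f (?y \<otimes>\<^bsub>G\<^esub> word_eval G ws))) \<le> K * length ws"
      using Cons.IH Cons.prems(1) y by simp
    ultimately show ?case by (simp add: algebra_simps)
  qed
  show ?thesis
    unfolding word_lipschitz_def
  proof (intro ballI)
    fix x y assume x: "x \<in> carrier G" and y: "y \<in> carrier G"
    obtain ws where ws: "length ws = word_dist G S x y" "set ws \<subseteq> letters G S"
      "inv\<^bsub>G\<^esub> x \<otimes>\<^bsub>G\<^esub> y = word_eval G ws"
      unfolding word_dist_def using G.shortest_word G.gens_subset G.generate_eq x y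
      by (metis G.inv_closed G.m_closed)
    have "y = x \<otimes>\<^bsub>G\<^esub> (inv\<^bsub>G\<^esub> x \<otimes>\<^bsub>G\<^esub> y)"
      using x y by (simp add: G.m_assoc[symmetric])
    then show "real (word_dist H T (f x) (f y)) \<le> K * real (word_dist G S x y)"
      using walk[OF ws(2) x] ws by metis
  qed
qed

lemma bilipschitz_equiv_iff_lipschitz_inverses:
  "bilipschitz_equiv G S H T \<longleftrightarrow>
    (\<exists>f g C. C \<ge> 1 \<and> f \<in> carrier G \<rightarrow> carrier H \<and> g \<in> carrier H \<rightarrow> carrier G
       \<and> (\<forall>x\<in>carrier G. g (f x) = x) \<and> (\<forall>y\<in>carrier H. f (g y) = y)
       \<and> word_lipschitz G S H T f C \<and> word_lipschitz H T G S g C)"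
  (is "?bilip \<longleftrightarrow> ?inverses")
proof
  assume ?bilip
  then obtain f and C :: real where C: "C \<ge> 1" and f: "bij_betw f (carrier G) (carrier H)"
    and bounds: "\<forall>x\<in>carrier G. \<forall>y\<in>carrier G.
      real (word_dist G S x y) / C \<le> real (word_dist H T (f x) (f y)) \<and>
      real (word_dist H T (f x) (f y)) \<le> C * real (word_dist G S x y)"
    unfolding bilipschitz_equiv_def by blast
  define g where "g = inv_into (carrier G) f"
  have g: "bij_betw g (carrier H) (carrier G)"
    unfolding g_def using f by (rule bij_betw_inv_into)
  have gf: "\<forall>x\<in>carrier G. g (f x) = x" and fg: "\<forall>y\<in>carrier H. f (g y) = y"
    unfolding g_def using f by (simp_all add: bij_betw_inv_into_left bij_betw_inv_into_right)
  have "word_lipschitz H T G S g C"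
    unfolding word_lipschitz_def
  proof (intro ballI)
    fix x y assume x: "x \<in> carrier H" and y: "y \<in> carrier H"
    then have "g x \<in> carrier G" "g y \<in> carrier G"
      using g by (auto simp: bij_betw_apply)
    then have "real (word_dist G S (g x) (g y)) / C \<le> real (word_dist H T (f (g x)) (f (g y)))"
      using bounds by blast
    then show "real (word_dist G S (g x) (g y)) \<le> C * real (word_dist H T x y)"
      using x y fg C by (simp add: divide_le_eq mult.commute)
  qed
  moreover have "word_lipschitz G S H T f C"
    using bounds by (simp add: word_lipschitz_def)
  ultimately show ?inverses
    using C f g gf fg by (metis bij_betw_imp_funcset)
next
  assume ?inverses
  then obtain f g C where C: "C \<ge> 1" and f: "f \<in> carrier G \<rightarrow> carrier H"
    and g: "g \<in> carrier H \<rightarrow> carrier G"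
    and gf: "\<forall>x\<in>carrier G. g (f x) = x" and fg: "\<forall>y\<in>carrier H. f (g y) = y"
    and lip_f: "word_lipschitz G S H T f C" and lip_g: "word_lipschitz H T G S g C"
    by blast
  show ?bilip
    unfolding bilipschitz_equiv_def
  proof (intro exI conjI ballI)
    show "bij_betw f (carrier G) (carrier H)"
      using f g gf fg by (intro bij_betwI) auto
    fix x y assume x: "x \<in> carrier G" and y: "y \<in> carrier G"
    have "real (word_dist G S (g (f x)) (g (f y))) \<le> C * real (word_dist H T (f x) (f y))"
      using lip_g f x y by (auto simp: word_lipschitz_def)
    then show "real (word_dist G S x y) / C \<le> real (word_dist H T (f x) (f y))"
      using gf x y C by (simp add: divide_le_eq mult.commute)
    show "real (word_dist H T (f x) (f y)) \<le> C * real (word_dist G S x y)"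
      using lip_f x y by (simp add: word_lipschitz_def)
  qed (fact C)
qed

definition lamp :: "('n, 'c) monoid_scheme \<Rightarrow> ('g, 'd) monoid_scheme \<Rightarrow> 'n \<Rightarrow> ('g \<Rightarrow> 'n) \<times> 'g" where
  "lamp N G a = (\<lambda>x. if x = \<one>\<^bsub>G\<^esub> then a else \<one>\<^bsub>N\<^esub>, \<one>\<^bsub>G\<^esub>)"

definition shift :: "('n, 'c) monoid_scheme \<Rightarrow> ('g, 'd) monoid_scheme \<Rightarrow> 'g \<Rightarrow> ('g \<Rightarrow> 'n) \<times> 'g" where
  "shift N G t = (\<lambda>_. \<one>\<^bsub>N\<^esub>, t)"

lemma wreath_gens_eq: "wreath_gens N S G T = lamp N G ` S \<union> shift N G ` T"
  unfolding wreath_gens_def lamp_def shift_def by simp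

lemma mem_wreath:
  "(c, p) \<in> carrier (wreath N G) \<longleftrightarrow> p \<in> carrier G \<and> (\<forall>x. c x \<in> carrier N)
     \<and> (\<forall>x. x \<notin> carrier G \<longrightarrow> c x = \<one>\<^bsub>N\<^esub>) \<and> finite {x. c x \<noteq> \<one>\<^bsub>N\<^esub>}"
  by (simp add: wreath_def)

lemma wreath_mult:
  "(c, p) \<otimes>\<^bsub>wreath N G\<^esub> (c', p') =
    (\<lambda>x. if x \<in> carrier G then c x \<otimes>\<^bsub>N\<^esub> c' (inv\<^bsub>G\<^esub> p \<otimes>\<^bsub>G\<^esub> x) else \<one>\<^bsub>N\<^esub>, p \<otimes>\<^bsub>G\<^esub> p')"
  by (simp add: wreath_def)

lemma wreath_one: "\<one>\<^bsub>wreath N G\<^esub> = (\<lambda>_. \<one>\<^bsub>N\<^esub>, \<one>\<^bsub>G\<^esub>)"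
  by (simp add: wreath_def)

lemma finite_support_reindex:
  assumes "finite {y. c y \<noteq> e}" "inj_on \<phi> A"
  shows "finite {x. (if x \<in> A then c (\<phi> x) else e) \<noteq> e}"
proof -
  have "{x. (if x \<in> A then c (\<phi> x) else e) \<noteq> e} = \<phi> -` {y. c y \<noteq> e} \<inter> A"
    by auto
  then show ?thesis using finite_vimage_IntI[OF assms] by simp
qed

locale wreath_product = N: group N + G: group G
  for N :: "('n, 'c) monoid_scheme" and G :: "('g, 'd) monoid_scheme"
begin

lemma wreath_mult_closed:
  assumes "(c, p) \<in> carrier (wreath N G)" "(c', p') \<in> carrier (wreath N G)"
  shows "(c, p) \<otimes>\<^bsub>wreath N G\<^esub> (c', p') \<in> carrier (wreath N G)"
proof -
  let ?c'' = "\<lambda>x. if x \<in> carrier G then c' (inv\<^bsub>G\<^esub> p \<otimes>\<^bsub>G\<^esub> x) else \<one>\<^bsub>N\<^esub>"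
  have p: "p \<in> carrier G" and c: "\<And>x. c x \<in> carrier N" "finite {x. c x \<noteq> \<one>\<^bsub>N\<^esub>}"
    and c': "\<And>x. c' x \<in> carrier N" "finite {x. c' x \<noteq> \<one>\<^bsub>N\<^esub>}"
    using assms by (auto simp: mem_wreath)
  have "finite {x. ?c'' x \<noteq> \<one>\<^bsub>N\<^esub>}"
    using finite_support_reindex[OF c'(2) G.inj_on_cmult[of "inv\<^bsub>G\<^esub> p"]] p by simp
  then have "finite ({x. c x \<noteq> \<one>\<^bsub>N\<^esub>} \<union> {x. ?c'' x \<noteq> \<one>\<^bsub>N\<^esub>})"
    using c(2) by simp
  then have "finite {x. (if x \<in> carrier G then c x \<otimes>\<^bsub>N\<^esub> c' (inv\<^bsub>G\<^esub> p \<otimes>\<^bsub>G\<^esub> x) else \<one>\<^bsub>N\<^esub>) \<noteq> \<one>\<^bsub>N\<^esub>}"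
    by (rule finite_subset[rotated]) (auto simp: c')
  then show ?thesis using assms by (auto simp: wreath_mult mem_wreath c c')
qed

lemma group_wreath: "group (wreath N G)"
proof (rule groupI)
  fix x y assume "x \<in> carrier (wreath N G)" "y \<in> carrier (wreath N G)"
  then show "x \<otimes>\<^bsub>wreath N G\<^esub> y \<in> carrier (wreath N G)"
    using wreath_mult_closed by (cases x, cases y) auto
next
  show "\<one>\<^bsub>wreath N G\<^esub> \<in> carrier (wreath N G)"
    by (auto simp: wreath_one mem_wreath)
next
  fix x y z assume "x \<in> carrier (wreath N G)" "y \<in> carrier (wreath N G)" "z \<in> carrier (wreath N G)"
  then show "x \<otimes>\<^bsub>wreath N G\<^esub> y \<otimes>\<^bsub>wreath N G\<^esub> z = x \<otimes>\<^bsub>wreath N G\<^esub> (y \<otimes>\<^bsub>wreath N G\<^esub> z)"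
    by (cases x, cases y, cases z)
      (auto simp: wreath_mult mem_wreath G.m_assoc N.m_assoc G.inv_mult_group)
next
  fix x assume "x \<in> carrier (wreath N G)"
  then show "\<one>\<^bsub>wreath N G\<^esub> \<otimes>\<^bsub>wreath N G\<^esub> x = x"
    by (cases x) (auto simp: wreath_one wreath_mult mem_wreath)
next
  fix x assume x: "x \<in> carrier (wreath N G)"
  obtain c p where x_eq: "x = (c, p)" by (cases x)
  have p: "p \<in> carrier G" and c: "\<And>x. c x \<in> carrier N" "finite {x. c x \<noteq> \<one>\<^bsub>N\<^esub>}"
    using x x_eq by (auto simp: mem_wreath)
  define y where "y = (\<lambda>x. if x \<in> carrier G then inv\<^bsub>N\<^esub> c (p \<otimes>\<^bsub>G\<^esub> x) else \<one>\<^bsub>N\<^esub>, inv\<^bsub>G\<^esub> p)"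
  have "finite {x. (if x \<in> carrier G then inv\<^bsub>N\<^esub> c (p \<otimes>\<^bsub>G\<^esub> x) else \<one>\<^bsub>N\<^esub>) \<noteq> \<one>\<^bsub>N\<^esub>}"
    by (rule finite_support_reindex[OF _ G.inj_on_cmult[OF p]]) (use c in simp)
  then have "y \<in> carrier (wreath N G)"
    using p c(1) unfolding y_def mem_wreath by auto
  moreover have "y \<otimes>\<^bsub>wreath N G\<^esub> x = \<one>\<^bsub>wreath N G\<^esub>"
    using p c(1) by (auto simp: y_def x_eq wreath_mult wreath_one G.m_assoc[symmetric])
  ultimately show "\<exists>y\<in>carrier (wreath N G). y \<otimes>\<^bsub>wreath N G\<^esub> x = \<one>\<^bsub>wreath N G\<^esub>"
    by blast
qed

sublocale W: group "wreath N G"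
  by (rule group_wreath)

lemma lamp_hom: "lamp N G \<in> hom N (wreath N G)"
  by (rule homI) (auto simp: lamp_def mem_wreath wreath_mult)

lemma shift_hom: "shift N G \<in> hom G (wreath N G)"
  by (rule homI) (auto simp: shift_def mem_wreath wreath_mult)

lemma group_hom_lamp: "group_hom N (wreath N G) (lamp N G)"
  unfolding group_hom_def group_hom_axioms_def
  using N.is_group group_wreath lamp_hom by simp

lemma group_hom_shift: "group_hom G (wreath N G) (shift N G)"
  unfolding group_hom_def group_hom_axioms_def
  using G.is_group group_wreath shift_hom by simp

lemma mult_shift:
  "(c, p) \<in> carrier (wreath N G) \<Longrightarrow> t \<in> carrier G \<Longrightarrow>
    (c, p) \<otimes>\<^bsub>wreath N G\<^esub> shift N G t = (c, p \<otimes>\<^bsub>G\<^esub> t)"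
  by (auto simp: shift_def wreath_mult mem_wreath)

lemma mult_lamp:
  assumes "(c, p) \<in> carrier (wreath N G)" "a \<in> carrier N"
  shows "(c, p) \<otimes>\<^bsub>wreath N G\<^esub> lamp N G a = (c(p := c p \<otimes>\<^bsub>N\<^esub> a), p)"
proof -
  have p: "p \<in> carrier G" and c: "\<And>x. c x \<in> carrier N" "\<And>x. x \<notin> carrier G \<Longrightarrow> c x = \<one>\<^bsub>N\<^esub>"
    using assms(1) by (auto simp: mem_wreath)
  have "inv\<^bsub>G\<^esub> p \<otimes>\<^bsub>G\<^esub> x = \<one>\<^bsub>G\<^esub> \<longleftrightarrow> x = p" if "x \<in> carrier G" for x
    using p that by (metis G.inv_closed G.inv_inv G.inv_equality G.r_inv)
  then show ?thesis
    using p c assms(2) by (auto simp: lamp_def wreath_mult)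
qed

lemma subgroup_with_lamps_and_shifts:
  assumes K: "subgroup K (wreath N G)"
    and lamps: "lamp N G ` carrier N \<subseteq> K" and shifts: "shift N G ` carrier G \<subseteq> K"
  shows "carrier (wreath N G) \<subseteq> K"
proof
  have base: "(c, \<one>\<^bsub>G\<^esub>) \<in> K"
    if "finite F" "F \<subseteq> carrier G" "(c, \<one>\<^bsub>G\<^esub>) \<in> carrier (wreath N G)" "{x. c x \<noteq> \<one>\<^bsub>N\<^esub>} \<subseteq> F"
    for c F
    using that
  proof (induction F arbitrary: c rule: finite_induct)
    case empty
    then have "c = (\<lambda>_. \<one>\<^bsub>N\<^esub>)" by auto
    then show ?case using subgroup.one_closed[OF K] by (simp add: wreath_one)
  next
    case (insert q F)
    let ?c0 = "c(q := \<one>\<^bsub>N\<^esub>)"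
    have q: "q \<in> carrier G" and cq: "c q \<in> carrier N"
      using insert.prems by (auto simp: mem_wreath)
    have "{x. ?c0 x \<noteq> \<one>\<^bsub>N\<^esub>} \<subseteq> {x. c x \<noteq> \<one>\<^bsub>N\<^esub>}" by auto
    then have c0: "(?c0, \<one>\<^bsub>G\<^esub>) \<in> carrier (wreath N G)"
      using insert.prems(2) by (auto simp: mem_wreath intro: finite_subset)
    have "{x. ?c0 x \<noteq> \<one>\<^bsub>N\<^esub>} \<subseteq> F"
      using insert.prems by auto
    then have "(?c0, \<one>\<^bsub>G\<^esub>) \<in> K"
      using insert.IH c0 insert.prems by simp
    \<comment> \<open>conjugating by \<open>shift N G q\<close> moves the lamp at \<open>\<one>\<close> to \<open>q\<close>\<close>
    moreover have "(c, \<one>\<^bsub>G\<^esub>) =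
        (?c0, \<one>\<^bsub>G\<^esub>) \<otimes>\<^bsub>wreath N G\<^esub> shift N G q \<otimes>\<^bsub>wreath N G\<^esub> lamp N G (c q)
          \<otimes>\<^bsub>wreath N G\<^esub> shift N G (inv\<^bsub>G\<^esub> q)"
    proof -
      have "(?c0, \<one>\<^bsub>G\<^esub>) \<otimes>\<^bsub>wreath N G\<^esub> shift N G q = (?c0, q)"
        using mult_shift[OF c0 q] q by simp
      moreover have "(?c0, q) \<otimes>\<^bsub>wreath N G\<^esub> lamp N G (c q) = (c, q)"
        using mult_lamp[of ?c0 q "c q"] c0 q cq by (auto simp: mem_wreath)
      moreover have "(c, q) \<otimes>\<^bsub>wreath N G\<^esub> shift N G (inv\<^bsub>G\<^esub> q) = (c, \<one>\<^bsub>G\<^esub>)"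
        using mult_shift[of c q "inv\<^bsub>G\<^esub> q"] insert.prems(2) q by (simp add: mem_wreath)
      ultimately show ?thesis by simp
    qed
    ultimately show ?case
      using lamps shifts q cq subgroup.m_closed[OF K] by (simp add: image_subset_iff)
  qed
  fix x assume x: "x \<in> carrier (wreath N G)"
  obtain c p where x_eq: "x = (c, p)" by (cases x)
  have p: "p \<in> carrier G" and c: "(c, \<one>\<^bsub>G\<^esub>) \<in> carrier (wreath N G)"
    using x x_eq by (auto simp: mem_wreath)
  have "{x. c x \<noteq> \<one>\<^bsub>N\<^esub>} \<subseteq> carrier G"
    using c by (auto simp: mem_wreath)
  then have "(c, \<one>\<^bsub>G\<^esub>) \<in> K"
    using base c by (auto simp: mem_wreath)
  moreover have "x = (c, \<one>\<^bsub>G\<^esub>) \<otimes>\<^bsub>wreath N G\<^esub> shift N G p"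
    using mult_shift[OF c p] p x_eq by simp
  moreover have "shift N G p \<in> K"
    using shifts p by auto
  ultimately show "x \<in> K"
    using subgroup.m_closed[OF K] by simp
qed

lemma generating_set_wreath:
  assumes "generating_set N SN" "generating_set G SG"
  shows "generating_set (wreath N G) (wreath_gens N SN G SG)"
proof -
  let ?S = "wreath_gens N SN G SG"
  have SN: "SN \<subseteq> carrier N" "generate N SN = carrier N"
    and SG: "SG \<subseteq> carrier G" "generate G SG = carrier G"
    using assms by (auto simp: generating_set_def generating_set_axioms_def)
  have S: "?S \<subseteq> carrier (wreath N G)"
    using SN(1) SG(1) lamp_hom shift_hom by (auto simp: wreath_gens_eq hom_def)
  have "lamp N G ` carrier N \<subseteq> generate (wreath N G) ?S"
    using group_hom.generate_img[OF group_hom_lamp SN(1)] SN(2)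
      W.mono_generate[of "lamp N G ` SN" ?S] by (simp add: wreath_gens_eq)
  moreover have "shift N G ` carrier G \<subseteq> generate (wreath N G) ?S"
    using group_hom.generate_img[OF group_hom_shift SG(1)] SG(2)
      W.mono_generate[of "shift N G ` SG" ?S] by (simp add: wreath_gens_eq)
  ultimately have "carrier (wreath N G) \<subseteq> generate (wreath N G) ?S"
    using subgroup_with_lamps_and_shifts W.generate_is_subgroup[OF S] by blast
  then show ?thesis
    using S W.generate_incl[OF S]
    by (auto simp: generating_set_def generating_set_axioms_def group_wreath)
qed

end

definition wreath_map ::
  "('n, 'c) monoid_scheme \<Rightarrow> ('h, 'e) monoid_scheme \<Rightarrow> ('g \<Rightarrow> 'h) \<Rightarrow> ('h \<Rightarrow> 'g)
    \<Rightarrow> ('g \<Rightarrow> 'n) \<times> 'g \<Rightarrow> ('h \<Rightarrow> 'n) \<times> 'h" where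
  "wreath_map N H f g = (\<lambda>(c, p). (\<lambda>y. if y \<in> carrier H then c (g y) else \<one>\<^bsub>N\<^esub>, f p))"

locale wreath_bijection = N: group N + G: group G + H: group H
  for N :: "('n, 'c) monoid_scheme" and G :: "('g, 'd) monoid_scheme"
    and H :: "('h, 'e) monoid_scheme" +
  fixes f :: "'g \<Rightarrow> 'h" and g :: "'h \<Rightarrow> 'g"
  assumes f_mem: "f \<in> carrier G \<rightarrow> carrier H" and g_mem: "g \<in> carrier H \<rightarrow> carrier G"
    and g_f: "\<And>x. x \<in> carrier G \<Longrightarrow> g (f x) = x"
    and f_g: "\<And>y. y \<in> carrier H \<Longrightarrow> f (g y) = y"
begin

sublocale WG: wreath_product N G ..
sublocale WH: wreath_product N H ..

lemma wreath_bijection_inverse: "wreath_bijection N H G g f"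
  by unfold_locales (use f_mem g_mem g_f f_g in auto)

lemma wreath_map_mem:
  assumes "x \<in> carrier (wreath N G)"
  shows "wreath_map N H f g x \<in> carrier (wreath N H)"
proof -
  obtain c p where x_eq: "x = (c, p)" by (cases x)
  have p: "p \<in> carrier G" and c: "\<And>x. c x \<in> carrier N" "finite {x. c x \<noteq> \<one>\<^bsub>N\<^esub>}"
    using assms x_eq by (auto simp: mem_wreath)
  have "inj_on g (carrier H)"
    using f_g by (rule inj_on_inverseI)
  then have "finite {y. (if y \<in> carrier H then c (g y) else \<one>\<^bsub>N\<^esub>) \<noteq> \<one>\<^bsub>N\<^esub>}"
    by (rule finite_support_reindex[OF c(2)])
  then show ?thesis
    using p c(1) f_mem by (auto simp: x_eq wreath_map_def mem_wreath)
qed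

lemma wreath_map_inverse:
  assumes "x \<in> carrier (wreath N G)"
  shows "wreath_map N G g f (wreath_map N H f g x) = x"
proof -
  obtain c p where x_eq: "x = (c, p)" by (cases x)
  have "p \<in> carrier G" "\<And>x. x \<notin> carrier G \<Longrightarrow> c x = \<one>\<^bsub>N\<^esub>"
    using assms x_eq by (auto simp: mem_wreath)
  then show ?thesis
    using f_mem g_f by (auto simp: x_eq wreath_map_def fun_eq_iff)
qed

lemma wreath_map_mult_lamp:
  assumes "x \<in> carrier (wreath N G)" "a \<in> carrier N"
  shows "wreath_map N H f g (x \<otimes>\<^bsub>wreath N G\<^esub> lamp N G a)
    = wreath_map N H f g x \<otimes>\<^bsub>wreath N H\<^esub> lamp N H a"
proof -
  obtain c p where x_eq: "x = (c, p)" by (cases x)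
  have p: "p \<in> carrier G" using assms x_eq by (simp add: mem_wreath)
  have "y = f p \<longleftrightarrow> g y = p" if "y \<in> carrier H" for y
    using that p f_g g_f by auto
  then show ?thesis
    using assms wreath_map_mem[OF assms(1)] p f_mem
    by (auto simp: x_eq WG.mult_lamp WH.mult_lamp wreath_map_def fun_eq_iff)
qed

lemma wreath_map_mult_shift:
  assumes "(c, p) \<in> carrier (wreath N G)" "t \<in> carrier G"
  shows "wreath_map N H f g ((c, p) \<otimes>\<^bsub>wreath N G\<^esub> shift N G t)
    = wreath_map N H f g (c, p) \<otimes>\<^bsub>wreath N H\<^esub> shift N H (inv\<^bsub>H\<^esub> f p \<otimes>\<^bsub>H\<^esub> f (p \<otimes>\<^bsub>G\<^esub> t))"
proof -
  have p: "p \<in> carrier G" using assms by (simp add: mem_wreath)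
  then have "f p \<in> carrier H" "f (p \<otimes>\<^bsub>G\<^esub> t) \<in> carrier H"
    using f_mem assms(2) by auto
  then show ?thesis
    using wreath_map_mem[OF assms(1)] assms
    by (simp add: WG.mult_shift WH.mult_shift wreath_map_def H.m_assoc[symmetric])
qed

lemma wreath_map_lipschitz:
  assumes SN: "generating_set N SN" and SG: "generating_set G SG" and SH: "generating_set H SH"
    and f_lip: "word_lipschitz G SG H SH f C" and C: "C \<ge> 1"
  shows "word_lipschitz (wreath N G) (wreath_gens N SN G SG) (wreath N H) (wreath_gens N SN H SH)
    (wreath_map N H f g) C"
proof (rule word_lipschitz_from_letters)
  show "generating_set (wreath N G) (wreath_gens N SN G SG)"
    using SN SG by (rule WG.generating_set_wreath)
  show "generating_set (wreath N H) (wreath_gens N SN H SH)"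
    using SN SH by (rule WH.generating_set_wreath)
  show "wreath_map N H f g \<in> carrier (wreath N G) \<rightarrow> carrier (wreath N H)"
    using wreath_map_mem by blast
  let ?\<Phi> = "wreath_map N H f g" and ?T = "wreath_gens N SN H SH"
  have SN_sub: "SN \<subseteq> carrier N" and SG_sub: "SG \<subseteq> carrier G" and SH_sub: "SH \<subseteq> carrier H"
    using SN SG SH by (simp_all add: generating_set_def generating_set_axioms_def)
  fix x s
  assume x: "x \<in> carrier (wreath N G)" and s: "s \<in> letters (wreath N G) (wreath_gens N SN G SG)"
  then have "s \<in> letters (wreath N G) (lamp N G ` SN) \<union> letters (wreath N G) (shift N G ` SG)"
    by (auto simp: wreath_gens_eq)
  then consider (lamp) a where "a \<in> letters N SN" "s = lamp N G a"
    | (shift) t where "t \<in> letters G SG" "s = shift N G t"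
    unfolding group_hom.letters_image[OF WG.group_hom_lamp SN_sub]
      group_hom.letters_image[OF WG.group_hom_shift SG_sub] by blast
  then show "real (word_dist (wreath N H) ?T (?\<Phi> x) (?\<Phi> (x \<otimes>\<^bsub>wreath N G\<^esub> s))) \<le> C"
  proof cases
    case lamp
    have a: "a \<in> carrier N" using lamp(1) SN_sub by auto
    have "lamp N H a \<in> carrier (wreath N H)"
      using WH.lamp_hom a by (rule hom_in_carrier)
    then have "word_dist (wreath N H) ?T (?\<Phi> x) (?\<Phi> (x \<otimes>\<^bsub>wreath N G\<^esub> s))
        = word_length (wreath N H) ?T (lamp N H a)"
      using lamp(2) wreath_map_mult_lamp[OF x a] wreath_map_mem[OF x]
      by (simp add: WH.W.word_dist_mult_right)
    also have "\<dots> \<le> word_length N SN a"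
      using group_hom.word_length_image_le[OF WH.group_hom_lamp SN_sub] a SN
      by (simp add: wreath_gens_eq generating_set.generate_eq)
    also have "\<dots> \<le> 1"
      using N.word_length_letter[OF SN_sub lamp(1)] .
    finally show ?thesis using C by simp
  next
    case shift
    obtain c p where x_eq: "x = (c, p)" by (cases x)
    have p: "p \<in> carrier G" and t: "t \<in> carrier G"
      using x x_eq shift(1) SG_sub by (auto simp: mem_wreath)
    define h where "h = inv\<^bsub>H\<^esub> f p \<otimes>\<^bsub>H\<^esub> f (p \<otimes>\<^bsub>G\<^esub> t)"
    have h: "h \<in> carrier H"
      using f_mem p t by (auto simp: h_def)
    have "shift N H h \<in> carrier (wreath N H)"
      using WH.shift_hom h by (rule hom_in_carrier)
    then have "word_dist (wreath N H) ?T (?\<Phi> x) (?\<Phi> (x \<otimes>\<^bsub>wreath N G\<^esub> s))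
        = word_length (wreath N H) ?T (shift N H h)"
      using shift(2) wreath_map_mult_shift[OF x[unfolded x_eq] t] wreath_map_mem[OF x]
      by (simp add: x_eq h_def WH.W.word_dist_mult_right)
    also have "\<dots> \<le> word_length H SH h"
      using group_hom.word_length_image_le[OF WH.group_hom_shift SH_sub] h SH
      by (simp add: wreath_gens_eq generating_set.generate_eq)
    also have "\<dots> = word_dist H SH (f p) (f (p \<otimes>\<^bsub>G\<^esub> t))"
      by (simp add: word_dist_def h_def)
    finally show ?thesis
      using word_lipschitz_letter_bound[OF G.is_group SG_sub f_lip _ p shift(1)] C by simp
  qed
qed

end

lemma fin_gen_set_imp_generating_set: "group G \<Longrightarrow> fin_gen_set G S \<Longrightarrow> generating_set G S"
  by (simp add: fin_gen_set_def generating_set_def generating_set_axioms_def)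

theorem lemma5p3:
  fixes N :: "('n, 'c) monoid_scheme" and G :: "('g, 'd) monoid_scheme"
    and H :: "('h, 'e) monoid_scheme"
    and SN :: "'n set" and SG :: "'g set" and SH :: "'h set"
  assumes "group N" and "group G" and "group H"
    and "fin_gen_set N SN" and "fin_gen_set G SG" and "fin_gen_set H SH"
    and "bilipschitz_equiv G SG H SH"
  shows "bilipschitz_equiv (wreath N G) (wreath_gens N SN G SG) (wreath N H) (wreath_gens N SN H SH)"
proof -
  have SN: "generating_set N SN" and SG: "generating_set G SG" and SH: "generating_set H SH"
    using assms(1-6) by (simp_all add: fin_gen_set_imp_generating_set)
  obtain f g C where C: "C \<ge> 1" and f: "f \<in> carrier G \<rightarrow> carrier H" and g: "g \<in> carrier H \<rightarrow> carrier G"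
    and g_f: "\<forall>x\<in>carrier G. g (f x) = x" and f_g: "\<forall>y\<in>carrier H. f (g y) = y"
    and f_lip: "word_lipschitz G SG H SH f C" and g_lip: "word_lipschitz H SH G SG g C"
    using assms(7) unfolding bilipschitz_equiv_iff_lipschitz_inverses by blast
  interpret wreath_bijection N G H f g
    using assms(1-3) f g g_f f_g by (simp add: wreath_bijection_def wreath_bijection_axioms_def)
  interpret inverse: wreath_bijection N H G g f
    by (rule wreath_bijection_inverse)
  show ?thesis
    unfolding bilipschitz_equiv_iff_lipschitz_inverses
    using C wreath_map_mem inverse.wreath_map_mem wreath_map_inverse inverse.wreath_map_inverse
      wreath_map_lipschitz[OF SN SG SH f_lip C] inverse.wreath_map_lipschitz[OF SN SH SG g_lip C]
    by blast
qed

end
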